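(* Let $a \ge 1$ and $1 \le k \le a$ be integers. There exist a finite directed graph $H$, vertices $p,q$ of $H$, an incoming arc $e_{in}$ ending at $p$ and an outgoing arc $e_{out}$ starting at $q$ (with their other endpoints outside $H$), such that every vertex of $H$ has in-degree plus out-degree at most $4$ when $e_{in}, e_{out}$ are counted, and for every nonnegative integer $t$ the following are equivalent: (1) $k \le t \le a$; (2) when $e_{in}$ and $e_{out}$ both receive label $t$, there is an assignment of nonnegative integer labels to the arcs of $H$ such that for every vertex $v$ of $H$ the sum of labels on arcs entering $v$ and the sum of labels on arcs leaving $v$ (including $e_{in}$ and $e_{out}$) are both equal to $a$, and every vertex of $H$ is connected to $p$ via arcs of $H$ with positive label (ignoring directions). *)

theory Defs
  imports Main
begin

text \<open>The two external arcs e_in (ending at p) and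
  e_out (starting at q) are not arcs of H; they are accounted for explicitly.\<close>

definition digraph_H :: "nat set \<Rightarrow> nat set \<Rightarrow> (nat \<Rightarrow> nat) \<Rightarrow> (nat \<Rightarrow> nat) \<Rightarrow> bool" where
  "digraph_H V A src tgt \<longleftrightarrow> finite V \<and> finite A \<and>
     (\<forall>e\<in>A. src e \<in> V \<and> tgt e \<in> V \<and> src e \<noteq> tgt e)"

definition in_arcs :: "nat set \<Rightarrow> (nat \<Rightarrow> nat) \<Rightarrow> nat \<Rightarrow> nat set" where
  "in_arcs A tgt v = {e \<in> A. tgt e = v}"

definition out_arcs :: "nat set \<Rightarrow> (nat \<Rightarrow> nat) \<Rightarrow> nat \<Rightarrow> nat set" where
  "out_arcs A src v = {e \<in> A. src e = v}"

definition total_degree :: "nat set \<Rightarrow> (nat \<Rightarrow> nat) \<Rightarrow> (nat \<Rightarrow> nat) \<Rightarrow> nat \<Rightarrow> nat \<Rightarrow> nat \<Rightarrow> nat" where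
  "total_degree A src tgt p q v =
     card (in_arcs A tgt v) + card (out_arcs A src v)
     + (if v = p then 1 else 0) + (if v = q then 1 else 0)"

definition pos_adj :: "nat set \<Rightarrow> (nat \<Rightarrow> nat) \<Rightarrow> (nat \<Rightarrow> nat) \<Rightarrow> (nat \<Rightarrow> nat) \<Rightarrow> (nat \<times> nat) set" where
  "pos_adj A src tgt f = {(src e, tgt e) | e. e \<in> A \<and> f e > 0} \<union> {(tgt e, src e) | e. e \<in> A \<and> f e > 0}"

definition valid_labelling :: "nat set \<Rightarrow> nat set \<Rightarrow> (nat \<Rightarrow> nat) \<Rightarrow> (nat \<Rightarrow> nat) \<Rightarrow> nat \<Rightarrow> nat
     \<Rightarrow> nat \<Rightarrow> nat \<Rightarrow> (nat \<Rightarrow> nat) \<Rightarrow> bool" where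
  "valid_labelling V A src tgt p q a t f \<longleftrightarrow>
     (\<forall>v\<in>V. (\<Sum>e\<in>in_arcs A tgt v. f e) + (if v = p then t else 0) = a
           \<and> (\<Sum>e\<in>out_arcs A src v. f e) + (if v = q then t else 0) = a)
     \<and> (\<forall>v\<in>V. (v, p) \<in> (pos_adj A src tgt f)\<^sup>*)"

end

theory Submission
  imports Defs
begin

text \<open>
  H is a chain of k copies of a six-vertex gadget; e_in enters the last gadget at vertex 0 and
  e_out leaves it at vertex 5, and consecutive gadgets are joined by two link arcs carrying the
  same label, say c j between gadgets j and j + 1, with c (k - 1) = t.  Balancing vertices 0 and 1
  of gadget j gives c j = c (j - 1) + d j, where d j is the label of the arc from vertex 1 into the
  2-cycle on vertices 2 and 3.  That 2-cycle is attached to the rest of H by this arc and by one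
  leaving arc, and balance forces both to carry d j, so connectivity forces d j \<ge> 1 and hence
  t = c (k - 1) \<ge> k; vertex 0 of the last gadget gives t \<le> a.  Conversely every
  1 \<le> c 0 < \<dots> < c (k - 1) = t \<le> a extends to a valid labelling, e.g. c j = t - (k - 1 - j).
\<close>

lemma pos_adj_arc:
  assumes "e \<in> A" and "0 < f e"
  shows "(src e, tgt e) \<in> pos_adj A src tgt f" and "(tgt e, src e) \<in> pos_adj A src tgt f"
  using assms unfolding pos_adj_def by blast+

lemma pos_adj_rtrancl_closed:
  assumes cut: "\<And>e. e \<in> A \<Longrightarrow> 0 < f e \<Longrightarrow> src e \<in> S \<longleftrightarrow> tgt e \<in> S"
    and "(x, y) \<in> (pos_adj A src tgt f)\<^sup>*" and "x \<in> S"
  shows "y \<in> S"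
proof -
  have "pos_adj A src tgt f `` S \<subseteq> S"
    using cut unfolding pos_adj_def by blast
  then have "(pos_adj A src tgt f)\<^sup>* `` S = S"
    by (rule Image_closed_trancl)
  then show ?thesis using assms(2,3) by blast
qed

lemma index_less_of_increasing:
  fixes c :: "nat \<Rightarrow> nat"
  assumes "0 < c 0" and "\<And>j. 0 < j \<Longrightarrow> j < k \<Longrightarrow> c (j - 1) < c j" and "j < k"
  shows "j < c j"
  using assms(3)
proof (induction j)
  case (Suc j)
  then show ?case using assms(2)[of "Suc j"] by simp
qed (use assms(1) in simp)

definition vtx :: "nat \<Rightarrow> nat \<Rightarrow> nat" where "vtx j r = 6 * j + r"
definition arc :: "nat \<Rightarrow> nat \<Rightarrow> nat" where "arc j s = 10 * j + s"

lemma vtx_eq_iff: "r < 6 \<Longrightarrow> r' < 6 \<Longrightarrow> vtx i r = vtx j r' \<longleftrightarrow> i = j \<and> r = r'"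
  unfolding vtx_def by presburger

lemma arc_eq_iff: "s < 10 \<Longrightarrow> s' < 10 \<Longrightarrow> arc i s = arc j s' \<longleftrightarrow> i = j \<and> s = s'"
  unfolding arc_def by presburger

definition gadget_arcs :: "nat \<Rightarrow> (nat \<times> nat) list" where
  "gadget_arcs j =
     [(vtx j 0, vtx j 1), (vtx j 1, vtx j 0), (vtx j 1, vtx j 2), (vtx j 2, vtx j 3),
      (vtx j 3, vtx j 2), (vtx j 3, vtx j 4), (vtx j 4, vtx j 5), (vtx j 5, vtx j 4),
      (vtx j 1, vtx (j - 1) 0), (vtx (j - 1) 5, vtx j 4)]"

definition chain_V :: "nat \<Rightarrow> nat set" where "chain_V k = {..<6 * k}"
definition chain_A :: "nat \<Rightarrow> nat set" where
  "chain_A k = {arc j s | j s. j < k \<and> s < 10 \<and> (8 \<le> s \<longrightarrow> 1 \<le> j)}"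
definition chain_src :: "nat \<Rightarrow> nat" where "chain_src e = fst (gadget_arcs (e div 10) ! (e mod 10))"
definition chain_tgt :: "nat \<Rightarrow> nat" where "chain_tgt e = snd (gadget_arcs (e div 10) ! (e mod 10))"

lemma chain_src_arc: "s < 10 \<Longrightarrow> chain_src (arc j s) = fst (gadget_arcs j ! s)"
  by (simp add: chain_src_def arc_def)
lemma chain_tgt_arc: "s < 10 \<Longrightarrow> chain_tgt (arc j s) = snd (gadget_arcs j ! s)"
  by (simp add: chain_tgt_def arc_def)

lemma arc_in_chain_A: "s < 10 \<Longrightarrow> arc j s \<in> chain_A k \<longleftrightarrow> j < k \<and> (8 \<le> s \<longrightarrow> 1 \<le> j)"
  unfolding chain_A_def by (auto simp: arc_eq_iff)

lemma vtx_in_chain_V: "r < 6 \<Longrightarrow> vtx j r \<in> chain_V k \<longleftrightarrow> j < k"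
  unfolding chain_V_def vtx_def by auto

lemma chain_A_cases:
  assumes "e \<in> chain_A k"
  obtains j where "j < k" and "e = arc j 0 \<or> e = arc j 1 \<or> e = arc j 2 \<or> e = arc j 3 \<or> e = arc j 4
     \<or> e = arc j 5 \<or> e = arc j 6 \<or> e = arc j 7 \<or> 1 \<le> j \<and> (e = arc j 8 \<or> e = arc j 9)"
proof -
  from assms obtain j s where "j < k" "s < 10" and s: "8 \<le> s \<longrightarrow> 1 \<le> j" and e: "e = arc j s"
    unfolding chain_A_def by blast
  have "s = 0 \<or> s = 1 \<or> s = 2 \<or> s = 3 \<or> s = 4 \<or> s = 5 \<or> s = 6 \<or> s = 7 \<or> s = 8 \<or> s = 9"
    using \<open>s < 10\<close> by presburger
  then show thesis using that[OF \<open>j < k\<close>] s unfolding e by auto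
qed

lemma chain_V_cases:
  assumes "v \<in> chain_V k"
  obtains j where "j < k" and "v = vtx j 0 \<or> v = vtx j 1 \<or> v = vtx j 2 \<or> v = vtx j 3 \<or> v = vtx j 4 \<or> v = vtx j 5"
proof -
  have "v div 6 < k" using assms by (auto simp: chain_V_def)
  moreover have "v mod 6 = 0 \<or> v mod 6 = 1 \<or> v mod 6 = 2 \<or> v mod 6 = 3 \<or> v mod 6 = 4 \<or> v mod 6 = 5"
    by presburger
  moreover have "v = vtx (v div 6) (v mod 6)" by (simp add: vtx_def)
  ultimately show thesis using that by metis
qed

lemmas chain_ends = chain_src_arc chain_tgt_arc gadget_arcs_def

lemma chain_in_arcs:
  assumes "j < k"
  shows "in_arcs (chain_A k) chain_tgt (vtx j 0) = {arc j 1} \<union> (if j + 1 < k then {arc (j + 1) 8} else {})"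
    "in_arcs (chain_A k) chain_tgt (vtx j 1) = {arc j 0}"
    "in_arcs (chain_A k) chain_tgt (vtx j 2) = {arc j 2, arc j 4}"
    "in_arcs (chain_A k) chain_tgt (vtx j 3) = {arc j 3}"
    "in_arcs (chain_A k) chain_tgt (vtx j 4) = {arc j 5, arc j 7} \<union> (if 1 \<le> j then {arc j 9} else {})"
    "in_arcs (chain_A k) chain_tgt (vtx j 5) = {arc j 6}"
  using assms unfolding in_arcs_def
  by (intro set_eqI iffI;
      (elim CollectE conjE chain_A_cases disjE; auto simp: chain_ends vtx_eq_iff arc_eq_iff)?;
      auto simp: chain_ends arc_in_chain_A split: if_splits)+

lemma chain_out_arcs:
  assumes "j < k"
  shows "out_arcs (chain_A k) chain_src (vtx j 0) = {arc j 0}"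
    "out_arcs (chain_A k) chain_src (vtx j 1) = {arc j 1, arc j 2} \<union> (if 1 \<le> j then {arc j 8} else {})"
    "out_arcs (chain_A k) chain_src (vtx j 2) = {arc j 3}"
    "out_arcs (chain_A k) chain_src (vtx j 3) = {arc j 4, arc j 5}"
    "out_arcs (chain_A k) chain_src (vtx j 4) = {arc j 6}"
    "out_arcs (chain_A k) chain_src (vtx j 5) = {arc j 7} \<union> (if j + 1 < k then {arc (j + 1) 9} else {})"
  using assms unfolding out_arcs_def
  by (intro set_eqI iffI;
      (elim CollectE conjE chain_A_cases disjE; auto simp: chain_ends vtx_eq_iff arc_eq_iff)?;
      auto simp: chain_ends arc_in_chain_A split: if_splits)+

abbreviation chain_entry :: "nat \<Rightarrow> nat" where "chain_entry k \<equiv> vtx (k - 1) 0"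
abbreviation chain_exit :: "nat \<Rightarrow> nat" where "chain_exit k \<equiv> vtx (k - 1) 5"

abbreviation chain_valid :: "nat \<Rightarrow> nat \<Rightarrow> nat \<Rightarrow> (nat \<Rightarrow> nat) \<Rightarrow> bool" where
  "chain_valid k a t f \<equiv>
     valid_labelling (chain_V k) (chain_A k) chain_src chain_tgt (chain_entry k) (chain_exit k) a t f"

lemmas chain_incidence = chain_in_arcs chain_out_arcs chain_in_arcs[simplified] chain_out_arcs[simplified]

lemma chain_total_degree_le_4:
  assumes "1 \<le> k" and "v \<in> chain_V k"
  shows "total_degree (chain_A k) chain_src chain_tgt (chain_entry k) (chain_exit k) v \<le> 4"
proof -
  obtain j where "j < k" and "v = vtx j 0 \<or> v = vtx j 1 \<or> v = vtx j 2 \<or> v = vtx j 3 \<or> v = vtx j 4 \<or> v = vtx j 5"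
    using assms(2) by (rule chain_V_cases)
  then show ?thesis
    using assms(1) unfolding total_degree_def
    by (elim disjE; auto simp: chain_incidence arc_eq_iff vtx_eq_iff)
qed

lemma digraph_chain: "digraph_H (chain_V k) (chain_A k) chain_src chain_tgt"
proof -
  have "finite (chain_A k)"
    by (rule finite_subset[of _ "{..<10 * k}"]) (auto simp: chain_A_def arc_def)
  moreover have "chain_src e \<in> chain_V k \<and> chain_tgt e \<in> chain_V k \<and> chain_src e \<noteq> chain_tgt e"
    if "e \<in> chain_A k" for e
    using that by (elim chain_A_cases disjE conjE; simp add: chain_ends vtx_in_chain_V vtx_eq_iff)
  ultimately show ?thesis unfolding digraph_H_def chain_V_def by blast
qed

definition gadget_flow :: "nat \<Rightarrow> (nat \<Rightarrow> nat) \<Rightarrow> nat \<Rightarrow> nat list" where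
  "gadget_flow a c j =
     (let d = (if j = 0 then c 0 else c j - c (j - 1))
      in [a, a - c j, d, a, a - d, d, a, a - c j, c (j - 1), c (j - 1)])"

definition chain_flow :: "nat \<Rightarrow> (nat \<Rightarrow> nat) \<Rightarrow> nat \<Rightarrow> nat" where
  "chain_flow a c e = gadget_flow a c (e div 10) ! (e mod 10)"

lemma chain_flow_arc: "s < 10 \<Longrightarrow> chain_flow a c (arc j s) = gadget_flow a c j ! s"
  by (simp add: chain_flow_def arc_def)

lemmas chain_flow_simps = chain_flow_arc gadget_flow_def Let_def

locale increasing_links =
  fixes k a t :: nat and c :: "nat \<Rightarrow> nat"
  assumes k_pos: "1 \<le> k"
    and c_first_pos: "0 < c 0"
    and c_increasing: "\<And>j. 0 < j \<Longrightarrow> j < k \<Longrightarrow> c (j - 1) < c j"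
    and c_le_a: "\<And>j. j < k \<Longrightarrow> c j \<le> a"
    and c_last: "c (k - 1) = t"
begin

lemma chain_flow_balanced:
  assumes "v \<in> chain_V k"
  shows "(\<Sum>e\<in>in_arcs (chain_A k) chain_tgt v. chain_flow a c e) + (if v = chain_entry k then t else 0) = a"
    and "(\<Sum>e\<in>out_arcs (chain_A k) chain_src v. chain_flow a c e) + (if v = chain_exit k then t else 0) = a"
proof -
  obtain j where j: "j < k" and v: "v = vtx j 0 \<or> v = vtx j 1 \<or> v = vtx j 2 \<or> v = vtx j 3 \<or> v = vtx j 4 \<or> v = vtx j 5"
    using assms by (rule chain_V_cases)
  have "c j \<le> a" "c (j - 1) \<le> c j" using j c_le_a c_increasing[of j] by (cases "j = 0"; simp)+
  moreover have "j = k - 1 \<Longrightarrow> c j = t" using c_last by simp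
  ultimately show "(\<Sum>e\<in>in_arcs (chain_A k) chain_tgt v. chain_flow a c e) + (if v = chain_entry k then t else 0) = a"
    "(\<Sum>e\<in>out_arcs (chain_A k) chain_src v. chain_flow a c e) + (if v = chain_exit k then t else 0) = a"
    using v j k_pos
    by (cases "j = 0"; elim disjE; auto simp: chain_incidence chain_flow_simps arc_eq_iff vtx_eq_iff)+
qed

lemma c_pos: "j < k \<Longrightarrow> 0 < c j"
  using index_less_of_increasing[OF c_first_pos c_increasing] by fastforce

lemma chain_flow_connected:
  assumes "v \<in> chain_V k"
  shows "(v, chain_entry k) \<in> (pos_adj (chain_A k) chain_src chain_tgt (chain_flow a c))\<^sup>*"
proof -
  let ?R = "pos_adj (chain_A k) chain_src chain_tgt (chain_flow a c)"
  have a_pos: "0 < a" using c_first_pos c_le_a[of 0] k_pos by simp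
  have step_pos: "0 < (if j = 0 then c 0 else c j - c (j - 1))" if "j < k" for j
    using c_first_pos c_increasing[of j] that by simp
  have gadget_step: "(vtx j (r + 1), vtx j r) \<in> ?R" if "j < k" "r < 5" for j r
  proof -
    have "r = 0 \<or> r = 1 \<or> r = 2 \<or> r = 3 \<or> r = 4" using \<open>r < 5\<close> by presburger
    then show ?thesis
      using that a_pos step_pos[of j]
        pos_adj_arc(2)[of "arc j ([0, 2, 3, 5, 6] ! r)" "chain_A k" "chain_flow a c" chain_tgt chain_src]
      by (elim disjE) (simp_all add: arc_in_chain_A chain_ends chain_flow_simps numeral_eq_Suc)
  qed
  have to_gadget_root: "(vtx j r, vtx j 0) \<in> ?R\<^sup>*" if "j < k" "r < 6" for j r
    using that(2)
  proof (induction r)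
    case (Suc r)
    then show ?case using gadget_step[OF \<open>j < k\<close>, of r] by (simp add: converse_rtrancl_into_rtrancl)
  qed simp
  have link_step: "(vtx j 0, vtx (Suc j) 0) \<in> ?R\<^sup>*" if "Suc j < k" for j
  proof -
    have "(vtx j 0, vtx (Suc j) 1) \<in> ?R"
      using that c_pos[of j] pos_adj_arc(2)[of "arc (Suc j) 8" "chain_A k" "chain_flow a c" chain_tgt chain_src]
      by (simp add: arc_in_chain_A chain_ends chain_flow_simps)
    then show ?thesis using to_gadget_root[OF that, of 1] by simp
  qed
  have to_entry: "(vtx j 0, chain_entry k) \<in> ?R\<^sup>*" if "j \<le> k - 1" for j
    using that
  proof (induction rule: inc_induct)
    case (step j)
    then have "Suc j < k" by simp
    then show ?case using step.IH link_step[of j] by (meson rtrancl_trans)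
  qed simp
  obtain j where "j < k" and "v = vtx j 0 \<or> v = vtx j 1 \<or> v = vtx j 2 \<or> v = vtx j 3 \<or> v = vtx j 4 \<or> v = vtx j 5"
    using assms by (rule chain_V_cases)
  then obtain r where "r < 6" and "v = vtx j r" by (elim disjE) (force intro: that)+
  moreover have "j \<le> k - 1" using \<open>j < k\<close> by simp
  ultimately show ?thesis
    using rtrancl_trans[OF to_gadget_root[OF \<open>j < k\<close>] to_entry] by simp
qed

lemma chain_flow_valid: "chain_valid k a t (chain_flow a c)"
  unfolding valid_labelling_def using chain_flow_balanced chain_flow_connected by blast

end

lemma chain_valid_balance:
  assumes "chain_valid k a t f" and "j < k"
  shows "f (arc j 1) + (if j + 1 < k then f (arc (j + 1) 8) else t) = a"
    and "f (arc j 1) + f (arc j 2) + (if 1 \<le> j then f (arc j 8) else 0) = a"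
    and "f (arc j 2) + f (arc j 4) = a"
    and "f (arc j 4) + f (arc j 5) = a"
proof -
  have "vtx j r \<in> chain_V k" if "r < 6" for r
    using that \<open>j < k\<close> by (simp add: vtx_in_chain_V)
  then have in_sums: "(\<Sum>e\<in>in_arcs (chain_A k) chain_tgt (vtx j r). f e) + (if vtx j r = chain_entry k then t else 0) = a"
    and out_sums: "(\<Sum>e\<in>out_arcs (chain_A k) chain_src (vtx j r). f e) + (if vtx j r = chain_exit k then t else 0) = a"
    if "r < 6" for r
    using assms(1) that unfolding valid_labelling_def by blast+
  show "f (arc j 1) + (if j + 1 < k then f (arc (j + 1) 8) else t) = a"
    using in_sums[of 0] \<open>j < k\<close> by (cases "j + 1 < k"; auto simp: chain_incidence arc_eq_iff vtx_eq_iff)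
  show "f (arc j 1) + f (arc j 2) + (if 1 \<le> j then f (arc j 8) else 0) = a"
    using out_sums[of 1] \<open>j < k\<close> by (cases "1 \<le> j"; auto simp: chain_incidence arc_eq_iff vtx_eq_iff)
  show "f (arc j 2) + f (arc j 4) = a"
    using in_sums[of 2] \<open>j < k\<close> by (simp add: chain_incidence arc_eq_iff vtx_eq_iff)
  show "f (arc j 4) + f (arc j 5) = a"
    using out_sums[of 3] \<open>j < k\<close> by (simp add: chain_incidence arc_eq_iff vtx_eq_iff)
qed

lemma chain_valid_step_pos:
  assumes valid: "chain_valid k a t f" and "j < k"
  shows "0 < f (arc j 2)"
proof (rule ccontr)
  txt \<open>Otherwise the 2-cycle on vertices 2 and 3 of gadget j is cut off from the entry.\<close>
  assume "\<not> 0 < f (arc j 2)"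
  then have "f (arc j 2) = 0" and "f (arc j 5) = 0"
    using chain_valid_balance(3,4)[OF assms] by simp_all
  let ?S = "{vtx j 2, vtx j 3}"
  have cut: "chain_src e \<in> ?S \<longleftrightarrow> chain_tgt e \<in> ?S" if "e \<in> chain_A k" "0 < f e" for e
    using that \<open>f (arc j 2) = 0\<close> \<open>f (arc j 5) = 0\<close>
    by (elim chain_A_cases disjE conjE; auto simp: chain_ends vtx_eq_iff)
  have reach: "(vtx j 2, chain_entry k) \<in> (pos_adj (chain_A k) chain_src chain_tgt f)\<^sup>*"
    using valid \<open>j < k\<close> unfolding valid_labelling_def by (simp add: vtx_in_chain_V)
  have "chain_entry k \<in> ?S"
    using pos_adj_rtrancl_closed[OF cut reach] by simp
  then show False by (simp add: vtx_eq_iff)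
qed

definition link_label :: "nat \<Rightarrow> nat \<Rightarrow> (nat \<Rightarrow> nat) \<Rightarrow> nat \<Rightarrow> nat" where
  "link_label k t f j = (if j + 1 < k then f (arc (j + 1) 8) else t)"

lemma chain_valid_increasing_links:
  assumes "1 \<le> k" and valid: "chain_valid k a t f"
  shows "increasing_links k a t (link_label k t f)"
proof
  have step: "link_label k t f j = f (arc j 2) + (if 1 \<le> j then link_label k t f (j - 1) else 0)"
    if "j < k" for j
    using chain_valid_balance(1,2)[OF valid that] that by (auto simp: link_label_def)
  show "0 < link_label k t f 0"
    using step[of 0] chain_valid_step_pos[OF valid, of 0] \<open>1 \<le> k\<close> by simp
  show "link_label k t f (j - 1) < link_label k t f j" if "0 < j" "j < k" for j
    using step[of j] chain_valid_step_pos[OF valid, of j] that by simp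
  show "link_label k t f j \<le> a" if "j < k" for j
    using chain_valid_balance(1)[OF valid that] by (simp add: link_label_def)
  show "link_label k t f (k - 1) = t"
    using \<open>1 \<le> k\<close> by (simp add: link_label_def)
qed (fact \<open>1 \<le> k\<close>)

lemma increasing_links_iff:
  assumes "1 \<le> k"
  shows "(\<exists>c. increasing_links k a t c) \<longleftrightarrow> k \<le> t \<and> t \<le> a"
proof
  assume "\<exists>c. increasing_links k a t c"
  then obtain c where "increasing_links k a t c" ..
  then interpret increasing_links k a t c .
  have "k - 1 < c (k - 1)"
    using index_less_of_increasing[OF c_first_pos c_increasing] k_pos by simp
  then show "k \<le> t \<and> t \<le> a" using c_last c_le_a[of "k - 1"] k_pos by simp
next
  assume "k \<le> t \<and> t \<le> a"
  then show "\<exists>c. increasing_links k a t c"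
    using assms by (intro exI[of _ "\<lambda>j. t + 1 + j - k"]) (unfold_locales, auto)
qed

theorem lemma4p5:
  fixes a k :: nat
  assumes "1 \<le> a" and "1 \<le> k" and "k \<le> a"
  shows "\<exists>(V::nat set) (A::nat set) (src::nat \<Rightarrow> nat) (tgt::nat \<Rightarrow> nat) p q.
           digraph_H V A src tgt \<and> p \<in> V \<and> q \<in> V \<and>
           (\<forall>v\<in>V. total_degree A src tgt p q v \<le> 4) \<and>
           (\<forall>t::nat. (k \<le> t \<and> t \<le> a) \<longleftrightarrow>
                     (\<exists>f::nat \<Rightarrow> nat. valid_labelling V A src tgt p q a t f))"
  \<comment> \<open>The hypothesis 1 \<le> a is implied by the other two.\<close>
proof (intro exI conjI allI)
  show "digraph_H (chain_V k) (chain_A k) chain_src chain_tgt" by (rule digraph_chain)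
  show "chain_entry k \<in> chain_V k" "chain_exit k \<in> chain_V k"
    using \<open>1 \<le> k\<close> by (simp_all add: vtx_in_chain_V)
  show "\<forall>v\<in>chain_V k. total_degree (chain_A k) chain_src chain_tgt (chain_entry k) (chain_exit k) v \<le> 4"
    using chain_total_degree_le_4 \<open>1 \<le> k\<close> by blast
  fix t
  have "(\<exists>f. chain_valid k a t f) \<longleftrightarrow> (\<exists>c. increasing_links k a t c)"
    using increasing_links.chain_flow_valid chain_valid_increasing_links \<open>1 \<le> k\<close> by blast
  then show "k \<le> t \<and> t \<le> a \<longleftrightarrow> (\<exists>f. chain_valid k a t f)"
    using increasing_links_iff \<open>1 \<le> k\<close> by blast
qed

end
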